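(* Let $\mathbb{F}_q$ be a finite field with $q$ elements and let $I\subset\mathbb{F}_q[x_1,\ldots,x_n]$ be a zero-dimensional ideal with irredundant primary decomposition $I=I_1\cap\cdots\cap I_t$. For $i=1,\ldots,t$ let $J_i=I_1\cap\cdots\cap I_{i-1}\cap I_{i+1}\cap\cdots\cap I_t$. Let $\Psi_I:\mathbb{F}_q[\mathbf{x}]/I\to\mathbb{F}_q[\mathbf{x}]/I$ be the $\mathbb{F}_q$-linear map $\Psi_I(\bar f)=\bar f^{\,q}-\bar f$. Then there exist $h_1,\ldots,h_t$ with $h_i\in J_i\setminus I_i$ and $\bar h_i^{\,2}=\bar h_i$ for each $i$, such that $\mathrm{Ker}(\Psi_I)$ is a direct product of one-dimensional $\mathbb{F}_q$-algebras $$\mathrm{Ker}(\Psi_I)=\langle\bar h_1\rangle\oplus\cdots\oplus\langle\bar h_t\rangle.$$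
   Context: An ideal $I$ is zero-dimensional if $\mathbb{F}_q[\mathbf{x}]/I$ is a finite-dimensional $\mathbb{F}_q$-vector space. $\bar h$ denotes the class of $h$ in $\mathbb{F}_q[\mathbf{x}]/I$; $\langle\bar h_i\rangle$ denotes the one-dimensional $\mathbb{F}_q$-subspace $\mathbb{F}_q\bar h_i$, and the decomposition is an internal direct sum of these subalgebras inside $\mathbb{F}_q[\mathbf{x}]/I$. For $t=1$, $J_1=\mathbb{F}_q[\mathbf{x}]$. *)

theory Defs
  imports Main "HOL-Library.Poly_Mapping"
begin

text \<open>Multivariate polynomials over 'a in the variables indexed by the finite type 'n
  (so n = CARD('n)): finitely supported maps from monomials (exponent vectors) to coefficients.\<close>
type_synonym ('n, 'a) mpoly = "('n \<Rightarrow>\<^sub>0 nat) \<Rightarrow>\<^sub>0 'a"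

definition pconst :: "'a::zero \<Rightarrow> ('n, 'a) mpoly" where
  "pconst c = Poly_Mapping.single 0 c"

definition is_ideal :: "'r::comm_ring_1 set \<Rightarrow> bool" where
  "is_ideal I \<longleftrightarrow> 0 \<in> I \<and> (\<forall>a\<in>I. \<forall>b\<in>I. a + b \<in> I) \<and> (\<forall>r. \<forall>a\<in>I. r * a \<in> I)"

definition radical :: "'r::comm_ring_1 set \<Rightarrow> 'r set" where
  "radical I = {f. \<exists>m. f ^ m \<in> I}"

definition primary_ideal :: "'r::comm_ring_1 set \<Rightarrow> bool" where
  "primary_ideal Q \<longleftrightarrow> is_ideal Q \<and> Q \<noteq> UNIV \<and>
     (\<forall>a b. a * b \<in> Q \<longrightarrow> a \<in> Q \<or> (\<exists>m. b ^ m \<in> Q))"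

definition Jcomp :: "(nat \<Rightarrow> 'r set) \<Rightarrow> nat \<Rightarrow> nat \<Rightarrow> 'r set" where
  "Jcomp Ic t i = \<Inter> (Ic ` ({..<t} - {i}))"

definition irredundant_primary_decomposition ::
  "'r::comm_ring_1 set \<Rightarrow> (nat \<Rightarrow> 'r set) \<Rightarrow> nat \<Rightarrow> bool" where
  "irredundant_primary_decomposition I Ic t \<longleftrightarrow>
     I = \<Inter> (Ic ` {..<t}) \<and> (\<forall>i<t. primary_ideal (Ic i)) \<and>
     (\<forall>i<t. \<forall>j<t. i \<noteq> j \<longrightarrow> radical (Ic i) \<noteq> radical (Ic j)) \<and>
     (\<forall>i<t. \<not> Jcomp Ic t i \<subseteq> Ic i)"

text \<open>Zero-dimensional: the quotient ring is a finite-dimensional 'a-vector space,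
  i.e. spanned (modulo I) by finitely many classes.\<close>
definition zero_dimensional :: "('n, 'a::field) mpoly set \<Rightarrow> bool" where
  "zero_dimensional I \<longleftrightarrow> is_ideal I \<and>
     (\<exists>B. finite B \<and> (\<forall>f. \<exists>c. f - (\<Sum>b\<in>B. pconst (c b) * b) \<in> I))"

end

theory Submission
  imports Defs "HOL-Computational_Algebra.Polynomial" "HOL-Library.FuncSet"
begin

text \<open>
  Modulo a primary ideal Q with finite quotient ring, every element outside the radical has a
  power congruent to 1, because its powers must repeat and Q is primary. Hence primary components
  with distinct radicals are pairwise comaximal, and the Chinese remainder construction gives h_i
  with h_i = 1 modulo I_i and h_i = 0 modulo I_j for j \<noteq> i; these are idempotent modulo I.
  Modulo a primary ideal Q, the identity f^q - f = \<Prod>c. (f - c) puts some f - c into the radical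
  of Q; every other factor f - d is then congruent to the nonzero constant c - d modulo that
  radical, so it lies outside it and primality gives f = c modulo Q. Thus f^q = f modulo I exactly
  when f = \<Sum>i. c_i h_i modulo I, and the c_i are unique since no I_i contains a nonzero constant.
\<close>

lemma pconst_0 [simp]: "pconst 0 = 0"
  by (simp add: pconst_def)

lemma pconst_1 [simp]: "pconst 1 = 1"
  by (simp add: pconst_def)

lemma pconst_add: "pconst (a + b) = pconst a + pconst b"
  by (simp add: pconst_def single_add)

lemma pconst_diff: "pconst ((a::'a::ab_group_add) - b) = pconst a - pconst b"
  by (simp add: pconst_def single_diff)

lemma pconst_mult: "pconst ((a::'a::comm_semiring_1) * b) = (pconst a * pconst b :: ('n,'a) mpoly)"
  by (simp add: pconst_def mult_single)

lemma pconst_power: "pconst ((a::'a::comm_semiring_1) ^ n) = (pconst a ^ n :: ('n,'a) mpoly)"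
  by (induction n) (simp_all add: pconst_mult)

lemma pconst_sum: "pconst (sum g S) = (\<Sum>x\<in>S. pconst (g x) :: ('n,'a::comm_monoid_add) mpoly)"
  by (induction S rule: infinite_finite_induct) (simp_all add: pconst_add)

lemma pconst_prod: "pconst (prod g S) = (\<Prod>x\<in>S. pconst (g x) :: ('n,'a::comm_semiring_1) mpoly)"
  by (induction S rule: infinite_finite_induct) (simp_all add: pconst_mult)

lemma ideal_add: "is_ideal I \<Longrightarrow> a \<in> I \<Longrightarrow> b \<in> I \<Longrightarrow> a + b \<in> I"
  by (simp add: is_ideal_def)

lemma ideal_mult_left: "is_ideal I \<Longrightarrow> a \<in> I \<Longrightarrow> r * a \<in> I"
  by (simp add: is_ideal_def)

lemma ideal_mult_right: "is_ideal I \<Longrightarrow> a \<in> I \<Longrightarrow> a * r \<in> I"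
  by (metis ideal_mult_left mult.commute)

lemma ideal_uminus: "is_ideal I \<Longrightarrow> a \<in> I \<Longrightarrow> - a \<in> I"
  by (metis ideal_mult_left mult_minus1)

lemma ideal_diff: "is_ideal I \<Longrightarrow> a \<in> I \<Longrightarrow> b \<in> I \<Longrightarrow> a - b \<in> I"
  by (metis ideal_add ideal_uminus diff_conv_add_uminus)

lemma ideal_sum: "is_ideal I \<Longrightarrow> (\<And>x. x \<in> S \<Longrightarrow> g x \<in> I) \<Longrightarrow> sum g S \<in> I"
  by (induction S rule: infinite_finite_induct) (auto simp: is_ideal_def)

lemma ideal_prod: "is_ideal I \<Longrightarrow> finite S \<Longrightarrow> x \<in> S \<Longrightarrow> g x \<in> I \<Longrightarrow> prod g S \<in> I"
  by (metis ideal_mult_right prod.remove)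

lemma ideal_eq_UNIV_if_one: "is_ideal I \<Longrightarrow> 1 \<in> I \<Longrightarrow> I = UNIV"
  by (metis UNIV_eq_I ideal_mult_left mult.right_neutral)

lemma ideal_power_mono: "is_ideal I \<Longrightarrow> a ^ m \<in> I \<Longrightarrow> m \<le> n \<Longrightarrow> a ^ n \<in> I"
  by (metis ideal_mult_right le_add_diff_inverse power_add)

lemma ideal_mult_cong: "is_ideal I \<Longrightarrow> a - b \<in> I \<Longrightarrow> c - d \<in> I \<Longrightarrow> a * c - b * d \<in> I"
proof -
  assume I: "is_ideal I" "a - b \<in> I" "c - d \<in> I"
  have "a * c - b * d = a * (c - d) + (a - b) * d"
    by (simp add: algebra_simps)
  thus ?thesis
    using I by (metis ideal_add ideal_mult_left ideal_mult_right)
qed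

lemma ideal_prod_cong:
  "is_ideal I \<Longrightarrow> (\<And>x. x \<in> S \<Longrightarrow> g x - g' x \<in> I) \<Longrightarrow> prod g S - prod g' S \<in> I"
  by (induction S rule: infinite_finite_induct) (auto simp: is_ideal_def intro: ideal_mult_cong)

lemma ideal_power_cong: "is_ideal I \<Longrightarrow> a - b \<in> I \<Longrightarrow> a ^ n - b ^ n \<in> I"
  using ideal_prod_cong[of I "{..<n}" "\<lambda>_. a" "\<lambda>_. b"] by simp

lemma ideal_subset_radical: "Q \<subseteq> radical Q"
proof
  fix a assume "a \<in> Q"
  hence "a ^ 1 \<in> Q" by simp
  thus "a \<in> radical Q" unfolding radical_def by blast
qed

lemma radical_powerD: "a ^ n \<in> radical Q \<Longrightarrow> a \<in> radical Q"
  unfolding radical_def by (auto simp: power_mult[symmetric])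

lemma is_ideal_radical:
  assumes Q: "is_ideal Q"
  shows "is_ideal (radical Q)"
  unfolding is_ideal_def
proof (intro conjI ballI allI)
  show "0 \<in> radical Q"
    using Q ideal_subset_radical unfolding is_ideal_def by blast
next
  fix r a assume "a \<in> radical Q"
  then obtain m where "a ^ m \<in> Q" unfolding radical_def by blast
  hence "r ^ m * a ^ m \<in> Q" by (rule ideal_mult_left[OF Q])
  thus "r * a \<in> radical Q" unfolding radical_def power_mult_distrib[symmetric] by blast
next
  fix a b assume "a \<in> radical Q" "b \<in> radical Q"
  then obtain m n where m: "a ^ m \<in> Q" and n: "b ^ n \<in> Q" unfolding radical_def by blast
  \<comment> \<open>in each binomial term either the power of a is at least m or that of b is at least n\<close>
  have "of_nat (m + n choose k) * a ^ k * b ^ (m + n - k) \<in> Q" for k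
  proof (cases "m \<le> k")
    case True
    hence "a ^ k \<in> Q" by (rule ideal_power_mono[OF Q m])
    thus ?thesis by (intro ideal_mult_right[OF Q] ideal_mult_left[OF Q])
  next
    case False
    hence "b ^ (m + n - k) \<in> Q" by (intro ideal_power_mono[OF Q n]) simp
    thus ?thesis by (rule ideal_mult_left[OF Q])
  qed
  hence "(a + b) ^ (m + n) \<in> Q"
    unfolding binomial_ring by (rule ideal_sum[OF Q])
  thus "a + b \<in> radical Q" unfolding radical_def by blast
qed

lemma pconst_not_in_radical:
  fixes c :: "'a::field"
  assumes Q: "is_ideal Q" and "1 \<notin> Q" and "c \<noteq> 0"
  shows "pconst c \<notin> (radical Q :: ('n, 'a) mpoly set)"
proof
  assume "pconst c \<in> radical Q"
  then obtain m where "pconst (c ^ m) \<in> Q" by (auto simp: radical_def pconst_power)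
  hence "pconst (inverse (c ^ m)) * pconst (c ^ m) \<in> Q" by (rule ideal_mult_left[OF Q])
  hence "(1 :: ('n, 'a) mpoly) \<in> Q" using \<open>c \<noteq> 0\<close> by (simp add: pconst_mult[symmetric])
  with \<open>1 \<notin> Q\<close> show False ..
qed

lemma primary_ideal_is_ideal: "primary_ideal Q \<Longrightarrow> is_ideal Q"
  by (simp add: primary_ideal_def)

lemma one_not_in_primary_ideal: "primary_ideal Q \<Longrightarrow> 1 \<notin> Q"
  unfolding primary_ideal_def using ideal_eq_UNIV_if_one by blast

lemma primary_idealD: "primary_ideal Q \<Longrightarrow> a * b \<in> Q \<Longrightarrow> a \<in> Q \<or> b \<in> radical Q"
  by (simp add: primary_ideal_def radical_def)

lemma radical_primary_mult:
  assumes "primary_ideal Q" "a * b \<in> radical Q"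
  shows "a \<in> radical Q \<or> b \<in> radical Q"
proof -
  obtain m where "a ^ m * b ^ m \<in> Q"
    using assms(2) by (auto simp: radical_def power_mult_distrib)
  from primary_idealD[OF assms(1) this] show ?thesis
    by (auto simp: radical_def power_mult[symmetric])
qed

lemma prod_in_radical_primary:
  assumes Q: "primary_ideal Q" and "finite S" and "prod g S \<in> radical Q"
  shows "\<exists>x\<in>S. g x \<in> radical Q"
  using assms(2,3)
proof (induction S rule: finite_induct)
  case empty
  thus ?case using one_not_in_primary_ideal[OF Q] by (simp add: radical_def)
next
  case (insert x F)
  thus ?case using radical_primary_mult[OF Q] by auto
qed

definition finite_quotient :: "'r::comm_ring_1 set \<Rightarrow> bool" where
  "finite_quotient Q \<longleftrightarrow> (\<exists>S. finite S \<and> (\<forall>f. \<exists>s\<in>S. f - s \<in> Q))"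

lemma zero_dimensional_finite_quotient:
  fixes I :: "('n, 'a::{finite,field}) mpoly set"
  assumes "zero_dimensional I" "I \<subseteq> Q"
  shows "finite_quotient Q"
proof -
  obtain B where B: "finite B" "\<And>f. \<exists>c. f - (\<Sum>b\<in>B. pconst (c b) * b) \<in> I"
    using assms(1) unfolding zero_dimensional_def by blast
  define S where "S = (\<lambda>c. \<Sum>b\<in>B. pconst (c b) * b) ` (B \<rightarrow>\<^sub>E UNIV)"
  have "finite S" unfolding S_def using B(1) by (intro finite_imageI finite_PiE) auto
  moreover have "\<exists>s\<in>S. f - s \<in> Q" for f
  proof -
    obtain c where c: "f - (\<Sum>b\<in>B. pconst (c b) * b) \<in> I" using B(2) by blast
    have "(\<Sum>b\<in>B. pconst (c b) * b) = (\<Sum>b\<in>B. pconst (restrict c B b) * b)"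
      by (intro sum.cong) auto
    moreover have "restrict c B \<in> B \<rightarrow>\<^sub>E UNIV" by simp
    ultimately have "(\<Sum>b\<in>B. pconst (c b) * b) \<in> S" unfolding S_def by (rule image_eqI)
    thus ?thesis using c assms(2) by blast
  qed
  ultimately show ?thesis unfolding finite_quotient_def by blast
qed

lemma primary_power_cong_one:
  assumes Q: "primary_ideal Q" and "finite_quotient Q" and a: "a \<notin> radical Q"
  shows "\<exists>k>0. a ^ k - 1 \<in> Q"
proof -
  obtain S where S: "finite S" "\<And>f. \<exists>s\<in>S. f - s \<in> Q"
    using \<open>finite_quotient Q\<close> unfolding finite_quotient_def by blast
  obtain r where r: "\<And>n. r n \<in> S \<and> a ^ n - r n \<in> Q"
    using choice[of "\<lambda>n s. s \<in> S \<and> a ^ n - s \<in> Q"] S(2) by blast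
  have "\<not> inj r"
    using finite_subset[OF _ S(1)] r range_inj_infinite by blast
  then obtain i j where "i < j" "r i = r j"
    unfolding inj_def by (metis linorder_neqE_nat)
  have "(a ^ j - r j) - (a ^ i - r i) \<in> Q"
    using ideal_diff[OF primary_ideal_is_ideal[OF Q] conjunct2[OF r] conjunct2[OF r]] .
  moreover have "a ^ j = a ^ (j - i) * a ^ i"
    using \<open>i < j\<close> by (simp add: power_add[symmetric])
  ultimately have "(a ^ (j - i) - 1) * a ^ i \<in> Q"
    using \<open>r i = r j\<close> by (simp add: algebra_simps)
  moreover have "a ^ i \<notin> radical Q"
    using a radical_powerD by blast
  ultimately have "a ^ (j - i) - 1 \<in> Q"
    using primary_idealD[OF Q] by blast
  thus ?thesis using \<open>i < j\<close> by (intro exI[of _ "j - i"]) simp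
qed

lemma comaximal_if_radical_not_subset:
  assumes Q1: "is_ideal Q1" and Q2: "primary_ideal Q2" "finite_quotient Q2"
    and "\<not> radical Q1 \<subseteq> radical Q2"
  shows "\<exists>u\<in>Q1. 1 - u \<in> Q2"
proof -
  obtain a m where a1: "a ^ m \<in> Q1" and a2: "a \<notin> radical Q2"
    using assms(4) by (auto simp: radical_def)
  have "is_ideal Q2" using Q2(1) by (rule primary_ideal_is_ideal)
  obtain k where "k > 0" "a ^ k - 1 \<in> Q2"
    using primary_power_cong_one[OF Q2 a2] by blast
  hence "(a ^ k) ^ m - 1 ^ m \<in> Q2"
    using \<open>is_ideal Q2\<close> by (intro ideal_power_cong)
  hence "- ((a ^ m) ^ k - 1) \<in> Q2"
    by (intro ideal_uminus[OF \<open>is_ideal Q2\<close>]) (simp add: power_mult[symmetric] mult.commute)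
  hence "1 - (a ^ m) ^ k \<in> Q2" by simp
  moreover have "(a ^ m) ^ k \<in> Q1"
    using ideal_power_mono[OF Q1, of "a ^ m" 1 k] a1 \<open>k > 0\<close> by simp
  ultimately show ?thesis by blast
qed

lemma primary_comaximal:
  assumes Q1: "primary_ideal Q1" "finite_quotient Q1" and Q2: "primary_ideal Q2" "finite_quotient Q2"
    and "radical Q1 \<noteq> radical Q2"
  shows "\<exists>u\<in>Q1. 1 - u \<in> Q2"
proof (cases "radical Q1 \<subseteq> radical Q2")
  case True
  hence "\<not> radical Q2 \<subseteq> radical Q1" using assms(5) by blast
  then obtain u where "u \<in> Q2" "1 - u \<in> Q1"
    using comaximal_if_radical_not_subset[OF primary_ideal_is_ideal[OF Q2(1)] Q1] by blast
  thus ?thesis by (intro bexI[of _ "1 - u"]) auto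
next
  case False
  thus ?thesis by (rule comaximal_if_radical_not_subset[OF primary_ideal_is_ideal[OF Q1(1)] Q2])
qed

definition crt_idempotents :: "(nat \<Rightarrow> 'r::comm_ring_1 set) \<Rightarrow> nat \<Rightarrow> (nat \<Rightarrow> 'r) \<Rightarrow> bool" where
  "crt_idempotents Q t h \<longleftrightarrow> (\<forall>i<t. h i - 1 \<in> Q i \<and> (\<forall>j<t. j \<noteq> i \<longrightarrow> h i \<in> Q j))"

lemma crt_idempotents_exist:
  assumes ideal: "\<And>i. i < t \<Longrightarrow> is_ideal (Q i)"
    and comaximal: "\<And>i j. i < t \<Longrightarrow> j < t \<Longrightarrow> i \<noteq> j \<Longrightarrow> \<exists>u\<in>Q j. 1 - u \<in> Q i"
  shows "\<exists>h. crt_idempotents Q t h"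
proof -
  obtain v where v: "\<And>i j. i < t \<Longrightarrow> j < t \<Longrightarrow> i \<noteq> j \<Longrightarrow> v i j \<in> Q j \<and> 1 - v i j \<in> Q i"
    using comaximal by metis
  define h where "h i = (\<Prod>j\<in>{..<t} - {i}. v i j)" for i
  have "h i - 1 \<in> Q i" if "i < t" for i
  proof -
    have "v i j - 1 \<in> Q i" if "j \<in> {..<t} - {i}" for j
      using ideal_uminus[OF ideal[OF \<open>i < t\<close>], of "1 - v i j"] v[of i j] that \<open>i < t\<close> by simp
    hence "(\<Prod>j\<in>{..<t} - {i}. v i j) - (\<Prod>j\<in>{..<t} - {i}. 1) \<in> Q i"
      by (rule ideal_prod_cong[OF ideal[OF that]])
    thus ?thesis unfolding h_def by simp
  qed
  moreover have "h i \<in> Q j" if "i < t" "j < t" "j \<noteq> i" for i j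
    unfolding h_def using that v[of i j] ideal[of j] by (intro ideal_prod) auto
  ultimately show ?thesis unfolding crt_idempotents_def by blast
qed

lemma crt_idempotents_sum_cong:
  assumes h: "crt_idempotents Q t h" and "j < t" and Qj: "is_ideal (Q j)"
  shows "(\<Sum>i<t. a i * h i) - a j \<in> Q j"
proof -
  have "(\<Sum>i<t. a i * h i) - a j = a j * (h j - 1) + (\<Sum>i\<in>{..<t} - {j}. a i * h i)"
    using \<open>j < t\<close> by (simp add: sum.remove algebra_simps)
  moreover have "a j * (h j - 1) \<in> Q j"
    using h \<open>j < t\<close> unfolding crt_idempotents_def by (blast intro: ideal_mult_left[OF Qj])
  moreover have "(\<Sum>i\<in>{..<t} - {j}. a i * h i) \<in> Q j"
    using h \<open>j < t\<close> unfolding crt_idempotents_def by (auto intro!: ideal_sum[OF Qj] ideal_mult_left[OF Qj])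
  ultimately show ?thesis using ideal_add[OF Qj] by simp
qed

lemma crt_idempotent_square:
  assumes h: "crt_idempotents Q t h" and ideal: "\<And>j. j < t \<Longrightarrow> is_ideal (Q j)" and "i < t"
  shows "h i * h i - h i \<in> \<Inter> (Q ` {..<t})"
proof (intro INT_I)
  fix j assume "j \<in> {..<t}"
  hence "is_ideal (Q j)" "j < t" using ideal by auto
  show "h i * h i - h i \<in> Q j"
  proof (cases "j = i")
    case True
    hence "h i * (h i - 1) \<in> Q j"
      using h \<open>i < t\<close> ideal_mult_left[OF \<open>is_ideal (Q j)\<close>] unfolding crt_idempotents_def by blast
    thus ?thesis by (simp add: algebra_simps)
  next
    case False
    hence "h i \<in> Q j" using h \<open>i < t\<close> \<open>j < t\<close> unfolding crt_idempotents_def by blast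
    thus ?thesis using \<open>is_ideal (Q j)\<close> by (intro ideal_diff ideal_mult_right)
  qed
qed

lemma crt_idempotent_mem_Jcomp:
  assumes h: "crt_idempotents Q t h" and "is_ideal (Q i)" "1 \<notin> Q i" and "i < t"
  shows "h i \<in> Jcomp Q t i - Q i"
proof -
  have "h i \<notin> Q i"
  proof
    assume "h i \<in> Q i"
    moreover have "h i - 1 \<in> Q i" using h \<open>i < t\<close> unfolding crt_idempotents_def by blast
    ultimately have "h i - (h i - 1) \<in> Q i" by (rule ideal_diff[OF \<open>is_ideal (Q i)\<close>])
    with \<open>1 \<notin> Q i\<close> show False by simp
  qed
  thus ?thesis using h \<open>i < t\<close> unfolding crt_idempotents_def Jcomp_def by auto
qed

lemma card_UNIV_field_ge_2: "card (UNIV :: 'a::{finite,field} set) \<ge> 2"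
proof -
  have "card {0, 1::'a} \<le> card (UNIV::'a set)" by (intro card_mono) auto
  thus ?thesis by simp
qed

lemma finite_field_power_card: "(x::'a::{finite,field}) ^ card (UNIV :: 'a set) = x"
proof (cases "x = 0")
  case True
  thus ?thesis using card_UNIV_field_ge_2[where 'a='a] by simp
next
  case False
  let ?S = "UNIV - {0::'a}"
  have "bij_betw (\<lambda>y. x * y) ?S ?S"
  proof (rule bij_betwI')
    show "\<And>a b. a \<in> ?S \<Longrightarrow> b \<in> ?S \<Longrightarrow> (x * a = x * b) = (a = b)" using False by simp
    show "\<And>a. a \<in> ?S \<Longrightarrow> x * a \<in> ?S" using False by simp
    fix y assume "y \<in> ?S"
    hence "y / x \<in> ?S \<and> y = x * (y / x)" using False by simp
    thus "\<exists>a\<in>?S. y = x * a" by blast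
  qed
  hence "(\<Prod>y\<in>?S. x * y) = (\<Prod>y\<in>?S. y)"
    using prod.reindex_bij_betw[of "\<lambda>y. x * y" ?S ?S "\<lambda>y. y"] by simp
  moreover have "(\<Prod>y\<in>?S. x * y) = x ^ card ?S * (\<Prod>y\<in>?S. y)"
    by (simp add: prod.distrib)
  moreover have "(\<Prod>y\<in>?S. y) \<noteq> 0" by simp
  ultimately have "x ^ card ?S = 1" by simp
  moreover have "card ?S = card (UNIV::'a set) - 1" by (simp add: card_Diff_singleton)
  hence "card (UNIV::'a set) = Suc (card ?S)" using card_UNIV_field_ge_2[where 'a='a] by linarith
  ultimately show ?thesis by (simp only: power_Suc mult_1_right)
qed

lemma prod_X_minus_const_finite_field:
  "(\<Prod>c\<in>(UNIV::'a::{finite,field} set). [:-c, 1:]) = monom 1 (card (UNIV::'a set)) - [:0, 1:]"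
  (is "?P = ?Q")
proof (rule poly_eqI_degree_lead_coeff[where n = "card (UNIV::'a set)" and A = UNIV])
  let ?q = "card (UNIV::'a set)"
  have q: "?q \<ge> 2" by (rule card_UNIV_field_ge_2)
  have deg: "degree ?P = ?q"
    by (subst degree_prod_eq_sum_degree) auto
  have "lead_coeff ?P = 1" by (simp add: lead_coeff_prod)
  thus "coeff ?P ?q = coeff ?Q ?q" using deg q by (simp add: coeff_pCons split: nat.splits)
  show "?q \<le> card (UNIV :: 'a set)" by simp
  show "degree ?P \<le> ?q" using deg by simp
  show "degree ?Q \<le> ?q" using q
    by (intro degree_diff_le) (auto intro: order.trans[OF degree_monom_le])
  fix z :: 'a
  have "poly ?P z = (\<Prod>c\<in>UNIV. z - c)" by (simp add: poly_prod)
  also have "\<dots> = 0" using prod_zero[of UNIV "\<lambda>c. z - c"] by auto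
  finally show "poly ?P z = poly ?Q z" by (simp add: poly_monom finite_field_power_card)
qed

lemma map_poly_pconst_mult:
  "map_poly pconst (p * q) = (map_poly pconst p * map_poly pconst q :: ('n,'a::field) mpoly poly)"
  by (rule poly_eqI) (simp add: coeff_map_poly coeff_mult pconst_sum pconst_mult)

lemma map_poly_pconst_prod:
  "map_poly pconst (prod g S) = (\<Prod>x\<in>S. map_poly pconst (g x) :: ('n,'a::field) mpoly poly)"
  by (induction S rule: infinite_finite_induct) (simp_all add: map_poly_pconst_mult)

lemma map_poly_pconst_diff:
  "map_poly pconst (p - q) = (map_poly pconst p - map_poly pconst q :: ('n,'a::field) mpoly poly)"
  by (rule poly_eqI) (simp add: coeff_map_poly pconst_diff)

lemma power_card_minus_eq_prod:
  fixes f :: "('n,'a::{finite,field}) mpoly"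
  shows "f ^ card (UNIV::'a set) - f = (\<Prod>c\<in>UNIV. f - pconst c)"
proof -
  have "poly (map_poly pconst (\<Prod>c\<in>(UNIV::'a set). [:-c, 1:])) f = (\<Prod>c\<in>UNIV. f - pconst c)"
    by (simp add: map_poly_pconst_prod poly_prod map_poly_pCons pconst_diff[of 0, simplified])
  moreover have "poly (map_poly pconst (monom 1 (card (UNIV::'a set)) - [:0::'a, 1:])) f
     = f ^ card (UNIV::'a set) - f"
    by (simp add: map_poly_pconst_diff map_poly_monom poly_monom map_poly_pCons)
  ultimately show ?thesis by (simp add: prod_X_minus_const_finite_field)
qed

lemma primary_ideal_cong_pconst:
  fixes f :: "('n,'a::{finite,field}) mpoly"
  assumes P: "primary_ideal Q" and f: "f ^ card (UNIV::'a set) - f \<in> Q"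
  shows "\<exists>c. f - pconst c \<in> Q"
proof -
  have Q: "is_ideal Q" using P by (rule primary_ideal_is_ideal)
  have rad: "is_ideal (radical Q)" using Q by (rule is_ideal_radical)
  have "(\<Prod>c\<in>UNIV. f - pconst c) \<in> radical Q"
    using f ideal_subset_radical unfolding power_card_minus_eq_prod by blast
  then obtain c where c: "f - pconst c \<in> radical Q"
    using prod_in_radical_primary[OF P finite_UNIV] by blast
  define R where "R = (\<Prod>d\<in>UNIV - {c}. f - pconst d)"
  have "f ^ card (UNIV::'a set) - f = (f - pconst c) * R"
    unfolding R_def power_card_minus_eq_prod by (intro prod.remove) simp_all
  hence "(f - pconst c) * R \<in> Q" using f by simp
  moreover have "R \<notin> radical Q"
  proof
    assume "R \<in> radical Q"
    \<comment> \<open>each factor f - d of R is congruent to c - d modulo the radical\<close>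
    have shift: "(f - pconst d) - pconst (c - d) = f - pconst c" for d
      by (simp add: pconst_diff)
    have "R - (\<Prod>d\<in>UNIV - {c}. pconst (c - d)) \<in> radical Q"
      unfolding R_def by (intro ideal_prod_cong[OF rad]) (simp only: shift c)
    from ideal_diff[OF rad \<open>R \<in> radical Q\<close> this]
    have "(\<Prod>d\<in>UNIV - {c}. pconst (c - d)) \<in> radical Q" by simp
    hence "pconst (\<Prod>d\<in>UNIV - {c}. c - d) \<in> radical Q" by (simp only: pconst_prod)
    moreover have "(\<Prod>d\<in>UNIV - {c}. c - d) \<noteq> 0" by simp
    ultimately show False
      using pconst_not_in_radical[OF Q one_not_in_primary_ideal[OF P]] by blast
  qed
  ultimately have "f - pconst c \<in> Q" using primary_idealD[OF P] by blast
  thus ?thesis ..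
qed

lemma frobenius_fixed_iff_cong_pconst:
  fixes f :: "('n,'a::{finite,field}) mpoly"
  assumes P: "primary_ideal Q"
  shows "f ^ card (UNIV::'a set) - f \<in> Q \<longleftrightarrow> (\<exists>c. f - pconst c \<in> Q)"
proof
  assume "f ^ card (UNIV::'a set) - f \<in> Q"
  thus "\<exists>c. f - pconst c \<in> Q" by (rule primary_ideal_cong_pconst[OF P])
next
  assume "\<exists>c. f - pconst c \<in> Q"
  then obtain c where c: "f - pconst c \<in> Q" ..
  have Q: "is_ideal Q" using P by (rule primary_ideal_is_ideal)
  from c have "f ^ card (UNIV::'a set) - pconst c ^ card (UNIV::'a set) \<in> Q"
    by (rule ideal_power_cong[OF Q])
  hence "f ^ card (UNIV::'a set) - pconst c \<in> Q"
    by (simp add: pconst_power[symmetric] finite_field_power_card)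
  from ideal_diff[OF Q this c] show "f ^ card (UNIV::'a set) - f \<in> Q" by simp
qed

lemma crt_combination_cong_iff:
  assumes h: "crt_idempotents Q t h" and "j < t" and Qj: "is_ideal (Q j)"
  shows "f - (\<Sum>i<t. a i * h i) \<in> Q j \<longleftrightarrow> f - a j \<in> Q j"
proof -
  have sum: "(\<Sum>i<t. a i * h i) - a j \<in> Q j"
    by (rule crt_idempotents_sum_cong[OF h \<open>j < t\<close> Qj])
  show ?thesis
  proof
    assume "f - (\<Sum>i<t. a i * h i) \<in> Q j"
    from ideal_add[OF Qj this sum] show "f - a j \<in> Q j" by simp
  next
    assume "f - a j \<in> Q j"
    from ideal_diff[OF Qj this sum] show "f - (\<Sum>i<t. a i * h i) \<in> Q j" by simp
  qed
qed

lemma frobenius_fixed_iff_crt_combination: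
  fixes Q :: "nat \<Rightarrow> ('n, 'a::{finite,field}) mpoly set"
  assumes prim: "\<And>i. i < t \<Longrightarrow> primary_ideal (Q i)" and h: "crt_idempotents Q t h"
  shows "f ^ card (UNIV::'a set) - f \<in> \<Inter> (Q ` {..<t}) \<longleftrightarrow>
    (\<exists>c. f - (\<Sum>i<t. pconst (c i) * h i) \<in> \<Inter> (Q ` {..<t}))"
proof -
  have cong: "f - (\<Sum>i<t. pconst (c i) * h i) \<in> Q j \<longleftrightarrow> f - pconst (c j) \<in> Q j"
    if "j < t" for c j
    using crt_combination_cong_iff[OF h that primary_ideal_is_ideal[OF prim[OF that]]] .
  have "f ^ card (UNIV::'a set) - f \<in> \<Inter> (Q ` {..<t}) \<longleftrightarrow> (\<forall>j<t. \<exists>c. f - pconst c \<in> Q j)"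
    using frobenius_fixed_iff_cong_pconst[OF prim] by blast
  also have "\<dots> \<longleftrightarrow> (\<exists>c. \<forall>j<t. f - pconst (c j) \<in> Q j)"
    by (rule choice_iff')
  also have "\<dots> \<longleftrightarrow> (\<exists>c. \<forall>j<t. f - (\<Sum>i<t. pconst (c i) * h i) \<in> Q j)"
    by (simp add: cong)
  also have "\<dots> \<longleftrightarrow> (\<exists>c. f - (\<Sum>i<t. pconst (c i) * h i) \<in> \<Inter> (Q ` {..<t}))"
    by blast
  finally show ?thesis .
qed

lemma crt_combination_coeffs_unique:
  fixes Q :: "nat \<Rightarrow> ('n, 'a::field) mpoly set"
  assumes ideal: "is_ideal (Q i)" and proper: "1 \<notin> Q i" and h: "crt_idempotents Q t h" and "i < t"
    and diff: "(\<Sum>i<t. pconst (c i) * h i) - (\<Sum>i<t. pconst (d i) * h i) \<in> Q i"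
  shows "c i = d i"
proof (rule ccontr)
  assume "c i \<noteq> d i"
  let ?s = "\<lambda>c. \<Sum>i<t. pconst (c i) * h i"
  have "(?s c - ?s d) - (?s c - pconst (c i)) + (?s d - pconst (d i)) \<in> Q i"
    using ideal_add[OF ideal ideal_diff[OF ideal diff crt_idempotents_sum_cong[OF h \<open>i < t\<close> ideal]]
        crt_idempotents_sum_cong[OF h \<open>i < t\<close> ideal]] .
  hence "pconst (c i - d i) \<in> Q i" by (simp add: pconst_diff)
  hence "pconst (c i - d i) \<in> radical (Q i)" using ideal_subset_radical by blast
  with pconst_not_in_radical[OF ideal proper] \<open>c i \<noteq> d i\<close> show False by simp
qed

lemma zero_dimensional_crt_idempotents_exist:
  fixes I :: "('n, 'a::{finite,field}) mpoly set"
  assumes "zero_dimensional I" and "irredundant_primary_decomposition I Ic t"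
  shows "\<exists>h. crt_idempotents Ic t h"
proof -
  have I: "I = \<Inter> (Ic ` {..<t})" and prim: "\<And>i. i < t \<Longrightarrow> primary_ideal (Ic i)"
    and rad: "\<And>i j. i < t \<Longrightarrow> j < t \<Longrightarrow> i \<noteq> j \<Longrightarrow> radical (Ic i) \<noteq> radical (Ic j)"
    using assms(2) unfolding irredundant_primary_decomposition_def by auto
  have finite: "\<And>i. i < t \<Longrightarrow> finite_quotient (Ic i)"
    using zero_dimensional_finite_quotient[OF assms(1)] I by blast
  have "\<exists>u\<in>Ic j. 1 - u \<in> Ic i" if "i < t" "j < t" "i \<noteq> j" for i j
    using that by (intro primary_comaximal prim finite rad) auto
  thus ?thesis
    using crt_idempotents_exist[of t Ic] prim primary_ideal_is_ideal by blast
qed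

theorem theorem3:
  fixes I :: "('n::finite, 'a::{finite,field}) mpoly set"
    and Ic :: "nat \<Rightarrow> ('n, 'a) mpoly set" and t :: nat
  assumes "zero_dimensional I"
    and "irredundant_primary_decomposition I Ic t"
  shows "\<exists>h :: nat \<Rightarrow> ('n, 'a) mpoly.
     (\<forall>i<t. h i \<in> Jcomp Ic t i - Ic i \<and> h i * h i - h i \<in> I) \<and>
     (\<forall>f. (f ^ card (UNIV :: 'a set) - f \<in> I) \<longleftrightarrow>
          (\<exists>c :: nat \<Rightarrow> 'a. f - (\<Sum>i<t. pconst (c i) * h i) \<in> I)) \<and>
     (\<forall>c d :: nat \<Rightarrow> 'a.
          (\<Sum>i<t. pconst (c i) * h i) - (\<Sum>i<t. pconst (d i) * h i) \<in> I
          \<longrightarrow> (\<forall>i<t. c i = d i))"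
proof -
  have I: "I = \<Inter> (Ic ` {..<t})" and prim: "\<And>i. i < t \<Longrightarrow> primary_ideal (Ic i)"
    using assms(2) unfolding irredundant_primary_decomposition_def by auto
  have ideal: "\<And>i. i < t \<Longrightarrow> is_ideal (Ic i)" and proper: "\<And>i. i < t \<Longrightarrow> 1 \<notin> Ic i"
    using prim primary_ideal_is_ideal one_not_in_primary_ideal by blast+
  obtain h where h: "crt_idempotents Ic t h"
    using zero_dimensional_crt_idempotents_exist[OF assms] by blast
  show ?thesis
  proof (intro exI[of _ h] conjI allI impI)
    fix i assume "i < t"
    show "h i \<in> Jcomp Ic t i - Ic i"
      using crt_idempotent_mem_Jcomp[OF h ideal proper] \<open>i < t\<close> by blast
    show "h i * h i - h i \<in> I"
      unfolding I by (rule crt_idempotent_square[OF h ideal \<open>i < t\<close>])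
  next
    fix f show "f ^ card (UNIV :: 'a set) - f \<in> I \<longleftrightarrow> (\<exists>c. f - (\<Sum>i<t. pconst (c i) * h i) \<in> I)"
      unfolding I by (rule frobenius_fixed_iff_crt_combination[OF prim h])
  next
    fix c d :: "nat \<Rightarrow> 'a" and i assume "i < t"
      and "(\<Sum>i<t. pconst (c i) * h i) - (\<Sum>i<t. pconst (d i) * h i) \<in> I"
    thus "c i = d i" using crt_combination_coeffs_unique[OF ideal proper h] I by blast
  qed
qed

end
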